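(* Let $\mathcal{L}\subseteq\{0,1\}^n$ be a nonempty lattice (closed under coordinatewise minimum and maximum) and let $d_{\mathcal{L}}(x)=\min_{y\in\mathcal{L}}\|x-y\|_1$. Define $f:\{0,1\}^{n+2}\to\mathbb{R}$, writing arguments as $(a,b,x)$ with $a,b\in\{0,1\}$, $x\in\{0,1\}^n$, by $f(0,0,x)=\|x\|_1$, $f(1,1,x)=1-\|x\|_1$, and $f(0,1,x)=f(1,0,x)=d_{\mathcal{L}}(x)$. Then $f$ has exactly $|\mathcal{L}|$ violated squares, namely the squares $\{(0,0,x),(0,1,x),(1,0,x),(1,1,x)\}$ for $x\in\mathcal{L}$.
   Context: A square in $\{0,1\}^m$ is a set $\{z, z+\mathbf{e}_i, z+\mathbf{e}_j, z+\mathbf{e}_i+\mathbf{e}_j\}$ with $i\neq j$, $z_i=z_j=0$, where $\mathbf{e}_i$ is the $i$-th standard basis vector; it is violated (for $f$) if $f(z)+f(z+\mathbf{e}_i+\mathbf{e}_j) > f(z+\mathbf{e}_i)+f(z+\mathbf{e}_j)$. *)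

theory Defs
  imports Complex_Main
begin

text \<open>Points of the cube {0,1}^m are boolean lists of length m (True = 1).\<close>

definition cube :: "nat \<Rightarrow> bool list set" where
  "cube m = {xs. length xs = m}"

definition norm1 :: "bool list \<Rightarrow> nat" where
  "norm1 x = length (filter id x)"

definition dist1 :: "bool list \<Rightarrow> bool list \<Rightarrow> nat" where
  "dist1 x y = length (filter id (map2 (\<noteq>) x y))"

definition is_lattice :: "nat \<Rightarrow> bool list set \<Rightarrow> bool" where
  "is_lattice n L \<longleftrightarrow> L \<subseteq> cube n \<and> L \<noteq> {} \<and>
     (\<forall>x\<in>L. \<forall>y\<in>L. map2 (\<and>) x y \<in> L \<and> map2 (\<or>) x y \<in> L)"

definition distL :: "bool list set \<Rightarrow> bool list \<Rightarrow> nat" where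
  "distL L x = Min ((\<lambda>y. dist1 x y) ` L)"

definition square :: "bool list \<Rightarrow> nat \<Rightarrow> nat \<Rightarrow> bool list set" where
  "square z i j = {z, z[i := True], z[j := True], z[i := True, j := True]}"

definition is_square_data :: "nat \<Rightarrow> bool list \<Rightarrow> nat \<Rightarrow> nat \<Rightarrow> bool" where
  "is_square_data m z i j \<longleftrightarrow> z \<in> cube m \<and> i < m \<and> j < m \<and> i \<noteq> j \<and> \<not> z ! i \<and> \<not> z ! j"

definition violated :: "(bool list \<Rightarrow> real) \<Rightarrow> bool list \<Rightarrow> nat \<Rightarrow> nat \<Rightarrow> bool" where
  "violated f z i j \<longleftrightarrow> f z + f (z[i := True, j := True]) > f (z[i := True]) + f (z[j := True])"

definition violated_squares :: "nat \<Rightarrow> (bool list \<Rightarrow> real) \<Rightarrow> bool list set set" where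
  "violated_squares m f = {square z i j | z i j. is_square_data m z i j \<and> violated f z i j}"

end

theory Submission
  imports Defs
begin

text \<open>Write a square's base point as a # b # x. If both flipped coordinates lie in x, the square
  is not violated: f restricted to a fixed head (a, b) is norm1, 1 - norm1 or distL, which are
  modular resp. submodular on the cube; submodularity of distL comes from closing the nearest points
  of x + e_i and x + e_j under meet and join. If exactly one flipped coordinate lies in the head,
  the violation inequality would force distL to jump by more than 1 along an edge, contradicting
  its 1-Lipschitz property. If both are head coordinates, the square is violated iff
  distL x < 1, i.e. iff x \<in> L.\<close>

lemma dist1_eq_sum:
  "length x = length y \<Longrightarrow> dist1 x y = (\<Sum>k<length x. if x!k \<noteq> y!k then 1 else 0)"
proof -
  assume l: "length x = length y"
  have "dist1 x y = card {k\<in>{..<length x}. x!k \<noteq> y!k}"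
    unfolding dist1_def length_filter_conv_card using l by (intro arg_cong[where f=card]) auto
  then show ?thesis by (simp add: sum.inter_filter[symmetric])
qed

lemma norm1_eq_sum: "norm1 x = (\<Sum>k<length x. if x!k then 1 else 0)"
proof -
  have "norm1 x = card {k\<in>{..<length x}. x!k}"
    unfolding norm1_def length_filter_conv_card by (intro arg_cong[where f=card]) auto
  then show ?thesis by (simp add: sum.inter_filter[symmetric])
qed

lemma norm1_list_update_True: "k < length x \<Longrightarrow> \<not> x!k \<Longrightarrow> norm1 (x[k:=True]) = norm1 x + 1"
proof -
  assume k: "k < length x" "\<not> x!k"
  have "norm1 (x[k:=True]) = (\<Sum>i<length x. (if x!i then 1 else 0) + (if i = k then 1 else 0))"
    unfolding norm1_eq_sum using k by (intro sum.cong) (auto simp: nth_list_update)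
  also have "\<dots> = norm1 x + 1" using k by (simp add: sum.distrib norm1_eq_sum)
  finally show ?thesis .
qed

lemma dist1_list_update_le:
  assumes "length x = length y" "k < length x"
  shows "dist1 (x[k:=c]) y \<le> dist1 x y + 1"
proof -
  have "dist1 (x[k:=c]) y \<le> (\<Sum>i<length x. (if x!i \<noteq> y!i then 1 else 0) + (if i = k then 1 else 0))"
    using assms by (simp add: dist1_eq_sum) (intro sum_mono, auto simp: nth_list_update)
  also have "\<dots> = dist1 x y + 1" using assms by (simp add: sum.distrib dist1_eq_sum)
  finally show ?thesis .
qed

lemma dist1_eq_0_iff: "length x = length y \<Longrightarrow> dist1 x y = 0 \<longleftrightarrow> x = y"
  by (auto simp: dist1_eq_sum intro: nth_equalityI split: if_splits)

lemma dist1_meet_join_le: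
  assumes "length x = n" "length y1 = n" "length y2 = n" "i < n" "j < n" "i \<noteq> j" "\<not> x!i" "\<not> x!j"
  shows "dist1 x (map2 (\<and>) y1 y2) + dist1 (x[i:=True, j:=True]) (map2 (\<or>) y1 y2)
         \<le> dist1 (x[i:=True]) y1 + dist1 (x[j:=True]) y2"
  using assms by (simp add: dist1_eq_sum sum.distrib[symmetric])
    (intro sum_mono, auto simp: nth_list_update)

lemma is_lattice_finite: "is_lattice n L \<Longrightarrow> finite L"
  unfolding is_lattice_def cube_def
  by (auto intro: finite_subset[OF _ finite_lists_length_eq[of UNIV n]])

lemma is_lattice_length: "is_lattice n L \<Longrightarrow> y \<in> L \<Longrightarrow> length y = n"
  by (auto simp: is_lattice_def cube_def)

lemma distL_le_dist1: "is_lattice n L \<Longrightarrow> y \<in> L \<Longrightarrow> distL L x \<le> dist1 x y"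
  unfolding distL_def using is_lattice_finite by (intro Min_le) auto

lemma distL_attained:
  assumes "is_lattice n L"
  obtains y where "y \<in> L" "distL L x = dist1 x y"
proof -
  have "distL L x \<in> (\<lambda>y. dist1 x y) ` L" unfolding distL_def
    using is_lattice_finite[OF assms] assms by (intro Min_in) (auto simp: is_lattice_def)
  then show ?thesis using that by auto
qed

lemma distL_eq_0_iff:
  assumes lat: "is_lattice n L" and x: "length x = n"
  shows "distL L x = 0 \<longleftrightarrow> x \<in> L"
proof
  assume "distL L x = 0"
  moreover obtain y where "y \<in> L" "distL L x = dist1 x y" using distL_attained[OF lat] .
  ultimately show "x \<in> L" using dist1_eq_0_iff is_lattice_length[OF lat] x by metis
next
  assume "x \<in> L"
  then show "distL L x = 0" using distL_le_dist1[OF lat, of x x] dist1_eq_0_iff[of x x] by simp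
qed

lemma distL_list_update_le:
  assumes "is_lattice n L" "length x = n" "k < n"
  shows "distL L (x[k:=c]) \<le> distL L x + 1"
proof -
  obtain y where y: "y \<in> L" "distL L x = dist1 x y" using distL_attained[OF assms(1)] .
  then show ?thesis
    using distL_le_dist1[OF assms(1) y(1), of "x[k:=c]"] dist1_list_update_le[of x y k c]
      is_lattice_length[OF assms(1) y(1)] assms by simp
qed

lemma distL_submodular:
  assumes lat: "is_lattice n L" and "length x = n" "i < n" "j < n" "i \<noteq> j" "\<not> x!i" "\<not> x!j"
  shows "distL L x + distL L (x[i:=True, j:=True]) \<le> distL L (x[i:=True]) + distL L (x[j:=True])"
proof -
  obtain y1 where y1: "y1 \<in> L" "distL L (x[i:=True]) = dist1 (x[i:=True]) y1"
    using distL_attained[OF lat] .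
  obtain y2 where y2: "y2 \<in> L" "distL L (x[j:=True]) = dist1 (x[j:=True]) y2"
    using distL_attained[OF lat] .
  have "map2 (\<and>) y1 y2 \<in> L" "map2 (\<or>) y1 y2 \<in> L"
    using lat y1 y2 by (auto simp: is_lattice_def)
  then have "distL L x \<le> dist1 x (map2 (\<and>) y1 y2)"
    "distL L (x[i:=True, j:=True]) \<le> dist1 (x[i:=True, j:=True]) (map2 (\<or>) y1 y2)"
    using distL_le_dist1[OF lat] by auto
  then show ?thesis
    using dist1_meet_join_le[OF assms(2) is_lattice_length[OF lat y1(1)]
        is_lattice_length[OF lat y2(1)] assms(3-)] y1 y2
    by linarith
qed

lemma square_swap: "i \<noteq> j \<Longrightarrow> square z i j = square z j i"
  by (auto simp: square_def list_update_swap)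

lemma violated_swap: "i \<noteq> j \<Longrightarrow> violated f z i j \<longleftrightarrow> violated f z j i"
  by (auto simp: violated_def list_update_swap)

lemma square_head:
  "square (False # False # x) 0 1 = {False # False # x, False # True # x, True # False # x, True # True # x}"
  by (auto simp: square_def)

lemma inj_head_square:
  "inj (\<lambda>x. {False # False # x, False # True # x, True # False # x, True # True # x})"
proof (rule injI)
  fix x y
  assume "{False # False # x, False # True # x, True # False # x, True # True # x} =
    {False # False # y, False # True # y, True # False # y, True # True # y}"
  then have "False # False # x \<in> {False # False # y, False # True # y, True # False # y, True # True # y}"
    by (metis insertI1)
  then show "x = y" by simp
qed

context
  fixes n :: nat and L :: "bool list set" and f :: "bool list \<Rightarrow> real"
  assumes lat: "is_lattice n L"
    and f00: "\<forall>x\<in>cube n. f (False # False # x) = real (norm1 x)"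
    and f11: "\<forall>x\<in>cube n. f (True # True # x) = 1 - real (norm1 x)"
    and f01: "\<forall>x\<in>cube n. f (False # True # x) = real (distL L x)"
    and f10: "\<forall>x\<in>cube n. f (True # False # x) = real (distL L x)"
begin

lemma f_Cons_Cons:
  "length x = n \<Longrightarrow> f (a # b # x) =
     (if a = b then (if a then 1 - real (norm1 x) else real (norm1 x)) else real (distL L x))"
  using f00 f11 f01 f10 by (cases a; cases b) (auto simp: cube_def)

lemma not_violated_tail_tail:
  assumes "length x = n" "i < n" "j < n" "i \<noteq> j" "\<not> x!i" "\<not> x!j"
  shows "\<not> violated f (a # b # x) (Suc (Suc i)) (Suc (Suc j))"
proof -
  have "norm1 (x[i:=True]) = norm1 x + 1" "norm1 (x[j:=True]) = norm1 x + 1"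
    "norm1 (x[i:=True, j:=True]) = norm1 x + 2"
    using assms norm1_list_update_True[of i x] norm1_list_update_True[of j]
      norm1_list_update_True[of j "x[i:=True]"] by (auto simp: nth_list_update)
  moreover have "real (distL L x) + distL L (x[i:=True, j:=True])
      \<le> real (distL L (x[i:=True])) + distL L (x[j:=True])"
    using distL_submodular[OF lat assms] by linarith
  ultimately show ?thesis using assms by (simp add: violated_def f_Cons_Cons)
qed

lemma not_violated_head_tail:
  assumes x: "length x = n" "j < n" "\<not> x!j" and i: "i < 2" "\<not> (a # b # x)!i"
  shows "\<not> violated f (a # b # x) i (Suc (Suc j))"
proof -
  have "norm1 (x[j:=True]) = norm1 x + 1" using x norm1_list_update_True by simp
  moreover have "distL L (x[j:=True]) \<le> distL L x + 1"
    using distL_list_update_le[OF lat x(1,2)] by simp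
  moreover have "distL L x \<le> distL L (x[j:=True]) + 1"
    using distL_list_update_le[OF lat _ x(2), of "x[j:=True]" "x!j"] x
    by (metis length_list_update list_update_id list_update_overwrite)
  ultimately show ?thesis using x i
    by (cases a; cases b; cases i) (simp_all add: violated_def f_Cons_Cons)
qed

lemma violated_head_head_iff:
  assumes "length x = n"
  shows "violated f (False # False # x) 0 1 \<longleftrightarrow> x \<in> L"
proof -
  have "violated f (False # False # x) 0 1 \<longleftrightarrow> 2 * real (distL L x) < 1"
    using assms by (simp add: violated_def f_Cons_Cons)
  also have "\<dots> \<longleftrightarrow> distL L x = 0" by linarith
  finally show ?thesis using distL_eq_0_iff[OF lat assms] by simp
qed

lemma violated_square_data:
  assumes sq: "is_square_data (n + 2) z i j" and ij: "i < j" and viol: "violated f z i j"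
  shows "i = 0 \<and> j = 1 \<and> (\<exists>x\<in>L. z = False # False # x)"
proof -
  obtain a b x where z: "z = a # b # x" and x: "length x = n"
    using sq unfolding is_square_data_def cube_def by (cases z; cases "tl z") auto
  consider (head) "j = 1" | (tail) j' where "j = Suc (Suc j')"
    using ij by (metis One_nat_def less_nat_zero_code not0_implies_Suc)
  then show ?thesis
  proof cases
    case head
    then show ?thesis
      using sq viol ij z x violated_head_head_iff by (auto simp: is_square_data_def)
  next
    case tail
    show ?thesis
    proof (cases "i < 2")
      case True
      then show ?thesis
        using not_violated_head_tail[OF x, of j' i a b] sq viol z tail
        by (auto simp: is_square_data_def)
    next
      case False
      then obtain i' where "i = Suc (Suc i')" by (metis add_2_eq_Suc le_Suc_ex not_less)
      then show ?thesis
        using not_violated_tail_tail[OF x, of i' j' a b] sq viol z tail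
        by (auto simp: is_square_data_def)
    qed
  qed
qed

lemma violated_squares_eq:
  "violated_squares (n + 2) f =
     (\<lambda>x. {False # False # x, False # True # x, True # False # x, True # True # x}) ` L"
  (is "_ = ?Q ` L")
proof (intro equalityI subsetI)
  fix S assume "S \<in> violated_squares (n + 2) f"
  then obtain z i j where S: "S = square z i j"
    and sq: "is_square_data (n + 2) z i j" and v: "violated f z i j"
    unfolding violated_squares_def by blast
  have "i < j \<or> j < i" using sq by (auto simp: is_square_data_def)
  then obtain x where "x \<in> L" "z = False # False # x" "square z i j = square z 0 1"
  proof
    assume "i < j"
    then show ?thesis using violated_square_data[OF sq _ v] that by auto
  next
    assume ji: "j < i"
    have "is_square_data (n + 2) z j i" using sq by (auto simp: is_square_data_def)
    moreover have "violated f z j i" using v violated_swap ji by simp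
    ultimately show ?thesis
      using violated_square_data[OF _ ji] square_swap[of i j z] ji that by auto
  qed
  then show "S \<in> ?Q ` L" using S square_head by auto
next
  fix S assume "S \<in> ?Q ` L"
  then obtain x where x: "x \<in> L" "S = ?Q x" by blast
  have "is_square_data (n + 2) (False # False # x) 0 1"
    using is_lattice_length[OF lat x(1)] by (simp add: is_square_data_def cube_def)
  moreover have "violated f (False # False # x) 0 1"
    using violated_head_head_iff is_lattice_length[OF lat x(1)] x(1) by simp
  ultimately show "S \<in> violated_squares (n + 2) f"
    unfolding violated_squares_def x(2) square_head[symmetric] by blast
qed

end

theorem lemma5:
  fixes n :: nat and L :: "bool list set" and f :: "bool list \<Rightarrow> real"
  assumes lat: "is_lattice n L"
    and f00: "\<forall>x\<in>cube n. f (False # False # x) = real (norm1 x)"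
    and f11: "\<forall>x\<in>cube n. f (True # True # x) = 1 - real (norm1 x)"
    and f01: "\<forall>x\<in>cube n. f (False # True # x) = real (distL L x)"
    and f10: "\<forall>x\<in>cube n. f (True # False # x) = real (distL L x)"
  shows "violated_squares (n + 2) f =
           (\<lambda>x. {False # False # x, False # True # x, True # False # x, True # True # x}) ` L
         \<and> card (violated_squares (n + 2) f) = card L"
  using violated_squares_eq[OF assms] card_image[OF inj_on_subset[OF inj_head_square]] by simp

end
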